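(* Let $X,Y$ be complex Banach spaces, $\emptyset\ne I\subseteq\mathbb R^n$, let $\mathcal B$ be a non-empty collection of non-empty subsets of $X$ such that every $x\in X$ belongs to some $B\in\mathcal B$, and let $\mathrm R$ be a non-empty collection of sequences in $\mathbb R^n$ such that $\mathbf t+\mathbf b(l)\in I$ whenever $\mathbf t\in I$, $\mathbf b\in\mathrm R$, $l\in\mathbb N$, and such that every subsequence of a sequence in $\mathrm R$ belongs to $\mathrm R$. Let $f:I\to\mathbb C$ be bounded and $\mathrm R$-multi-almost periodic, and let $F:I\times X\to Y$ be $(\mathrm R,\mathcal B)$-multi-almost periodic and bounded on each set $I\times B$, $B\in\mathcal B$. Then $F_1(\mathbf t;x):=f(\mathbf t)F(\mathbf t;x)$, $\mathbf t\in I$, $x\in X$, is $(\mathrm R,\mathcal B)$-multi-almost periodic.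
   Context: A continuous $F:I\times X\to Y$ is $(\mathrm R,\mathcal B)$-multi-almost periodic if for every $B\in\mathcal B$ and every $(\mathbf b_k)\in\mathrm R$ there exist a subsequence $(\mathbf b_{k_l})$ and a function $F^\ast:I\times X\to Y$ with $\lim_{l\to\infty}F(\mathbf t+\mathbf b_{k_l};x)=F^\ast(\mathbf t;x)$ uniformly for $x\in B$, $\mathbf t\in I$. A continuous $f:I\to\mathbb C$ is $\mathrm R$-multi-almost periodic if for every $(\mathbf b_k)\in\mathrm R$ there exist a subsequence $(\mathbf b_{k_l})$ and $f^\ast:I\to\mathbb C$ with $f(\mathbf t+\mathbf b_{k_l})\to f^\ast(\mathbf t)$ uniformly on $I$. *)

theory Defs
  imports "HOL-Analysis.Analysis"
begin

text \<open>Complex Banach spaces: real Banach spaces with a compatible complex scalar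
  multiplication (the library has no such class).\<close>
class scaleC =
  fixes scaleC :: "complex \<Rightarrow> 'a \<Rightarrow> 'a" (infixr \<open>*\<^sub>C\<close> 75)

class complex_banach = banach + scaleC +
  assumes scaleC_add_right: "a *\<^sub>C (x + y) = a *\<^sub>C x + a *\<^sub>C y"
    and scaleC_add_left: "(a + b) *\<^sub>C x = a *\<^sub>C x + b *\<^sub>C x"
    and scaleC_scaleC: "a *\<^sub>C (b *\<^sub>C x) = (a * b) *\<^sub>C x"
    and scaleC_one: "1 *\<^sub>C x = x"
    and scaleR_scaleC: "scaleR r x = complex_of_real r *\<^sub>C x"
    and norm_scaleC: "norm (a *\<^sub>C x) = cmod a * norm x"

text \<open>R-multi-almost periodicity of a continuous f : I \<rightarrow> C (I a subset of R^n).
  Values of f outside I are irrelevant.\<close>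
definition R_multi_ap ::
  "(real^'n) set \<Rightarrow> (nat \<Rightarrow> real^'n) set \<Rightarrow> (real^'n \<Rightarrow> complex) \<Rightarrow> bool" where
  "R_multi_ap I R f \<longleftrightarrow> continuous_on I f \<and>
     (\<forall>b\<in>R. \<exists>r fs. strict_mono r \<and>
        uniform_limit I (\<lambda>l t. f (t + b (r l))) fs sequentially)"

definition RB_multi_ap ::
  "(real^'n) set \<Rightarrow> (nat \<Rightarrow> real^'n) set \<Rightarrow> 'x set set
     \<Rightarrow> (real^'n \<Rightarrow> 'x::topological_space \<Rightarrow> 'y::metric_space) \<Rightarrow> bool" where
  "RB_multi_ap I R \<B> F \<longleftrightarrow> continuous_on (I \<times> UNIV) (\<lambda>(t, x). F t x) \<and>
     (\<forall>B\<in>\<B>. \<forall>b\<in>R. \<exists>r Fs. strict_mono r \<and>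
        uniform_limit (I \<times> B) (\<lambda>l (t, x). F (t + b (r l)) x) (\<lambda>(t, x). Fs t x) sequentially)"

end

theory Submission
  imports Defs
begin

text \<open>Given a sequence \<open>b \<in> R\<close>, first pass to a subsequence along which the translates of \<open>f\<close>
  converge uniformly on \<open>I\<close>; since \<open>R\<close> is closed under subsequences, a further subsequence makes the
  translates of \<open>F\<close> converge uniformly on \<open>I \<times> B\<close> as well. Complex scalar multiplication is a
  bounded bilinear map, so uniform convergence passes to the products because all the functions
  involved are bounded.\<close>

lemma bounded_bilinear_scaleC: "bounded_bilinear (scaleC :: complex \<Rightarrow> 'a::complex_banach \<Rightarrow> 'a)"
proof
  fix a a' :: complex and b b' :: 'a and r :: real
  show "(a + a') *\<^sub>C b = a *\<^sub>C b + a' *\<^sub>C b" by (rule scaleC_add_left)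
  show "a *\<^sub>C (b + b') = a *\<^sub>C b + a *\<^sub>C b'" by (rule scaleC_add_right)
  show "(r *\<^sub>R a) *\<^sub>C b = r *\<^sub>R (a *\<^sub>C b)"
    by (simp add: scaleR_conv_of_real scaleR_scaleC scaleC_scaleC)
  show "a *\<^sub>C (r *\<^sub>R b) = r *\<^sub>R (a *\<^sub>C b)"
    by (simp add: scaleR_scaleC scaleC_scaleC mult.commute)
next
  show "\<exists>K. \<forall>a b. norm (a *\<^sub>C (b::'a)) \<le> norm a * norm b * K"
    by (rule exI[of _ 1]) (simp add: norm_scaleC)
qed

lemma continuous_on_scaleC_product:
  fixes f :: "'a::topological_space \<Rightarrow> complex"
    and F :: "'a \<Rightarrow> 'b::topological_space \<Rightarrow> 'c::complex_banach"
  assumes "continuous_on I f" and "continuous_on (I \<times> X) (\<lambda>(t, x). F t x)"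
  shows "continuous_on (I \<times> X) (\<lambda>(t, x). f t *\<^sub>C F t x)"
proof -
  interpret bounded_bilinear "scaleC :: complex \<Rightarrow> 'c \<Rightarrow> 'c" by (rule bounded_bilinear_scaleC)
  have "continuous_on (I \<times> X) (\<lambda>p. f (fst p))"
    by (rule continuous_on_compose2[OF assms(1) continuous_on_fst]) auto
  moreover have "continuous_on (I \<times> X) (\<lambda>p. F (fst p) (snd p))"
    using assms(2) by (simp add: case_prod_beta')
  ultimately show ?thesis
    by (subst case_prod_beta') (rule continuous_on)
qed

lemma uniform_limit_scaleC:
  fixes g :: "nat \<Rightarrow> 'a::topological_space \<Rightarrow> complex" and h :: "nat \<Rightarrow> 'a \<Rightarrow> 'b::complex_banach"
  assumes "uniform_limit X g G sequentially" and "uniform_limit X h H sequentially"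
    and "\<And>n. bounded (g n ` X)" and "\<And>n. bounded (h n ` X)"
  shows "uniform_limit X (\<lambda>n x. g n x *\<^sub>C h n x) (\<lambda>x. G x *\<^sub>C H x) sequentially"
proof -
  interpret bounded_bilinear "scaleC :: complex \<Rightarrow> 'b \<Rightarrow> 'b" by (rule bounded_bilinear_scaleC)
  have "bounded (G ` X)"
    by (rule uniform_limit_bounded[OF assms(1)]) (simp_all add: assms(3))
  moreover have "bounded (H ` X)"
    by (rule uniform_limit_bounded[OF assms(2)]) (simp_all add: assms(4))
  ultimately
  show ?thesis using assms(1,2) by (intro bounded_uniform_limit)
qed

lemma uniform_limit_subseq:
  assumes "uniform_limit X g G sequentially" and "strict_mono r"
  shows "uniform_limit X (\<lambda>l. g (r l)) G sequentially"
  using filterlim_compose[OF assms(1) filterlim_subseq[OF assms(2)]] by (simp add: o_def)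

lemma bounded_translate_on_product:
  fixes G :: "real^'n \<Rightarrow> 'x \<Rightarrow> 'y::metric_space"
  assumes "bounded ((\<lambda>(t, x). G t x) ` (I \<times> B))" and "\<forall>t\<in>I. t + c \<in> I"
  shows "bounded ((\<lambda>(t, x). G (t + c) x) ` (I \<times> B))"
  by (rule bounded_subset[OF assms(1)]) (use assms(2) in force)

lemma R_multi_ap_RB_multi_ap_common_subseq:
  assumes "R_multi_ap I R f" and "RB_multi_ap I R \<B> F" and "B \<in> \<B>" and "b \<in> R"
    and "\<forall>r. strict_mono r \<longrightarrow> b \<circ> r \<in> R"
  obtains r fs Fs where "strict_mono r"
    and "uniform_limit (I \<times> B) (\<lambda>l (t, x). f (t + b (r l))) (\<lambda>(t, x). fs t) sequentially"
    and "uniform_limit (I \<times> B) (\<lambda>l (t, x). F (t + b (r l)) x) (\<lambda>(t, x). Fs t x) sequentially"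
proof -
  obtain r1 fs where r1: "strict_mono r1"
    and f_lim: "uniform_limit I (\<lambda>l t. f (t + b (r1 l))) fs sequentially"
    using assms(1,4) unfolding R_multi_ap_def by blast
  obtain r2 Fs where r2: "strict_mono r2"
    and F_lim: "uniform_limit (I \<times> B) (\<lambda>l (t, x). F (t + b (r1 (r2 l))) x) (\<lambda>(t, x). Fs t x)
      sequentially"
    using assms(2,3,5) r1 unfolding RB_multi_ap_def by fastforce
  have "uniform_limit I (\<lambda>l t. f (t + b (r1 (r2 l)))) fs sequentially"
    using uniform_limit_subseq[OF f_lim r2] .
  then have "uniform_limit (I \<times> B) (\<lambda>l p. f (fst p + b (r1 (r2 l)))) (\<lambda>p. fs (fst p)) sequentially"
    by (rule uniform_limit_compose') auto
  then have "uniform_limit (I \<times> B) (\<lambda>l (t, x). f (t + b (r1 (r2 l)))) (\<lambda>(t, x). fs t) sequentially"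
    by (simp add: case_prod_beta')
  with r1 r2 F_lim show thesis
    by (intro that[of "r1 \<circ> r2"]) (simp_all add: strict_mono_o)
qed

theorem proposition2p20:
  fixes I :: "(real^'n) set"
    and \<B> :: "'x::complex_banach set set"
    and R :: "(nat \<Rightarrow> real^'n) set"
    and f :: "real^'n \<Rightarrow> complex"
    and F :: "real^'n \<Rightarrow> 'x \<Rightarrow> 'y::complex_banach"
  assumes "I \<noteq> {}"
    and "\<B> \<noteq> {}" and "\<forall>B\<in>\<B>. B \<noteq> {}" and "\<forall>x. \<exists>B\<in>\<B>. x \<in> B"
    and "R \<noteq> {}"
    and "\<forall>t\<in>I. \<forall>b\<in>R. \<forall>l. t + b l \<in> I"
    and "\<forall>b\<in>R. \<forall>r. strict_mono r \<longrightarrow> b \<circ> r \<in> R"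
    and "bounded (f ` I)" and "R_multi_ap I R f"
    and "RB_multi_ap I R \<B> F"
    and "\<forall>B\<in>\<B>. bounded ((\<lambda>(t, x). F t x) ` (I \<times> B))"
  shows "RB_multi_ap I R \<B> (\<lambda>t x. f t *\<^sub>C F t x)"
proof -
  have "\<exists>r Fs. strict_mono r \<and> uniform_limit (I \<times> B)
      (\<lambda>l (t, x). f (t + b (r l)) *\<^sub>C F (t + b (r l)) x) (\<lambda>(t, x). Fs t x) sequentially"
    if B: "B \<in> \<B>" and b: "b \<in> R" for B b
  proof -
    obtain r fs Fs where r: "strict_mono r"
      and f_lim: "uniform_limit (I \<times> B) (\<lambda>l (t, x). f (t + b (r l))) (\<lambda>(t, x). fs t) sequentially"
      and F_lim: "uniform_limit (I \<times> B) (\<lambda>l (t, x). F (t + b (r l)) x) (\<lambda>(t, x). Fs t x) sequentially"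
      using R_multi_ap_RB_multi_ap_common_subseq[OF assms(9,10) B b] assms(7) b by metis
    have "bounded ((\<lambda>(t, x). f t) ` (I \<times> B))"
      by (rule bounded_subset[OF assms(8)]) auto
    then have "bounded ((\<lambda>(t, x). f (t + b (r l))) ` (I \<times> B))" for l
      using bounded_translate_on_product[of "\<lambda>t x. f t"] assms(6) b by blast
    moreover have "bounded ((\<lambda>(t, x). F (t + b (r l)) x) ` (I \<times> B))" for l
      using bounded_translate_on_product assms(6,11) B b by blast
    ultimately have "uniform_limit (I \<times> B) (\<lambda>l (t, x). f (t + b (r l)) *\<^sub>C F (t + b (r l)) x)
        (\<lambda>(t, x). fs t *\<^sub>C Fs t x) sequentially"
      using uniform_limit_scaleC[OF f_lim F_lim] by (simp add: case_prod_beta')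
    with r show ?thesis by blast
  qed
  moreover have "continuous_on (I \<times> UNIV) (\<lambda>(t, x). f t *\<^sub>C F t x)"
    using assms(9,10) unfolding R_multi_ap_def RB_multi_ap_def
    by (intro continuous_on_scaleC_product) simp_all
  ultimately show ?thesis
    unfolding RB_multi_ap_def by blast
qed

end
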